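(* Let $H$ be a simple $3$-connected graph and $\mathcal{F}$ an arbitrary family of injective maps from $X=\{a,b,c,d\}$ to $V(H)$. Let $G$ be a $2$-connected graph with $X\subseteq V(G)$ and a $2$-separation $(A,B)$ with $A\cap B=\{u,v\}$. Suppose $u,v\in X$, and that some vertex of $X\setminus\{u,v\}$ lies in $A\setminus\{u,v\}$ and some vertex of $X\setminus\{u,v\}$ lies in $B\setminus\{u,v\}$. Then $G$ does not have an $H(X)$-minor.
   Context: A $2$-separation is a pair $(A,B)$ with $A\cup B=V(G)$, $|A\cap B|\le2$ and no edge between $A\setminus B$ and $B\setminus A$. An $H$-model in $G$ is a family $\{G_x:x\in V(H)\}$ of pairwise vertex-disjoint connected subgraphs of $G$ such that for every edge $xy\in E(H)$ some vertex of $G_x$ is adjacent in $G$ to some vertex of $G_y$. For injective $\pi:X\to V(H)$, $G$ has an $H(X)$-minor with respect to $\pi$ if there is an $H$-model with $w\in V(G_{\pi(w)})$ for all $w\in X$; $G$ has an $H(X)$-minor (with respect to $\mathcal{F}$) if this holds for some $\pi\in\mathcal{F}$. *)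

theory Defs
  imports Main
begin

definition graph :: "'a set \<Rightarrow> ('a \<Rightarrow> 'a \<Rightarrow> bool) \<Rightarrow> bool" where
  "graph V E \<longleftrightarrow> finite V \<and> (\<forall>x y. E x y \<longrightarrow> x \<in> V \<and> y \<in> V)
     \<and> (\<forall>x y. E x y \<longrightarrow> E y x) \<and> (\<forall>x. \<not> E x x)"

definition connected_on :: "('a \<Rightarrow> 'a \<Rightarrow> bool) \<Rightarrow> 'a set \<Rightarrow> bool" where
  "connected_on E S \<longleftrightarrow> S \<noteq> {} \<and>
     (\<forall>x\<in>S. \<forall>y\<in>S. (\<lambda>p q. E p q \<and> p \<in> S \<and> q \<in> S)\<^sup>*\<^sup>* x y)"

definition k_connected :: "nat \<Rightarrow> 'a set \<Rightarrow> ('a \<Rightarrow> 'a \<Rightarrow> bool) \<Rightarrow> bool" where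
  "k_connected k V E \<longleftrightarrow> card V > k \<and>
     (\<forall>S. S \<subseteq> V \<and> card S < k \<longrightarrow> connected_on E (V - S))"

definition two_separation ::
  "'a set \<Rightarrow> ('a \<Rightarrow> 'a \<Rightarrow> bool) \<Rightarrow> 'a set \<Rightarrow> 'a set \<Rightarrow> bool" where
  "two_separation V E A B \<longleftrightarrow> A \<union> B = V \<and> card (A \<inter> B) \<le> 2 \<and>
     (\<forall>x\<in>A - B. \<forall>y\<in>B - A. \<not> E x y)"

definition is_model ::
  "'b set \<Rightarrow> ('b \<Rightarrow> 'b \<Rightarrow> bool) \<Rightarrow> 'a set \<Rightarrow> ('a \<Rightarrow> 'a \<Rightarrow> bool)
     \<Rightarrow> ('b \<Rightarrow> 'a set) \<Rightarrow> bool" where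
  "is_model VH EH VG EG M \<longleftrightarrow>
     (\<forall>x\<in>VH. M x \<subseteq> VG \<and> connected_on EG (M x)) \<and>
     (\<forall>x\<in>VH. \<forall>y\<in>VH. x \<noteq> y \<longrightarrow> M x \<inter> M y = {}) \<and>
     (\<forall>x\<in>VH. \<forall>y\<in>VH. EH x y \<longrightarrow> (\<exists>p\<in>M x. \<exists>q\<in>M y. EG p q))"

definition has_rooted_minor_wrt ::
  "'b set \<Rightarrow> ('b \<Rightarrow> 'b \<Rightarrow> bool) \<Rightarrow> 'a set \<Rightarrow> ('a \<Rightarrow> 'a \<Rightarrow> bool)
     \<Rightarrow> 'a set \<Rightarrow> ('a \<Rightarrow> 'b) \<Rightarrow> bool" where
  "has_rooted_minor_wrt VH EH VG EG X \<pi> \<longleftrightarrow>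
     (\<exists>M. is_model VH EH VG EG M \<and> (\<forall>w\<in>X. w \<in> M (\<pi> w)))"

definition has_rooted_minor ::
  "'b set \<Rightarrow> ('b \<Rightarrow> 'b \<Rightarrow> bool) \<Rightarrow> 'a set \<Rightarrow> ('a \<Rightarrow> 'a \<Rightarrow> bool)
     \<Rightarrow> 'a set \<Rightarrow> ('a \<Rightarrow> 'b) set \<Rightarrow> bool" where
  "has_rooted_minor VH EH VG EG X F \<longleftrightarrow>
     (\<exists>\<pi>\<in>F. has_rooted_minor_wrt VH EH VG EG X \<pi>)"

end

theory Submission
  imports Defs
begin

text \<open>Deleting the two images \<open>\<pi> u\<close>, \<open>\<pi> v\<close> from the 3-connected graph H leaves a
connected graph. Its branch sets avoid the branch sets of \<open>\<pi> u\<close> and \<open>\<pi> v\<close>, hence the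
separator \<open>{u, v}\<close>, so each lies entirely on one side of the separation; adjacent branch
sets lie on the same side. The roots in \<open>A - B\<close> and \<open>B - A\<close> thus end up on a common side.\<close>

lemma connected_on_propagate:
  assumes "connected_on E S" "x \<in> S" "P x"
    and step: "\<And>p q. E p q \<Longrightarrow> p \<in> S \<Longrightarrow> q \<in> S \<Longrightarrow> P p \<Longrightarrow> P q"
  shows "\<forall>y\<in>S. P y"
proof
  fix y assume "y \<in> S"
  with assms(1,2) have "(\<lambda>p q. E p q \<and> p \<in> S \<and> q \<in> S)\<^sup>*\<^sup>* x y"
    unfolding connected_on_def by blast
  then show "P y"
    by (induction rule: rtranclp_induct) (use assms(3) step in blast)+
qed

lemma two_separation_edge_side:
  assumes "two_separation V E A B" "E p q" "q \<in> V" "q \<notin> A \<inter> B" "p \<in> A - B"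
  shows "q \<in> A - B"
  using assms unfolding two_separation_def by blast

lemma two_separation_connected_side:
  assumes sep: "two_separation V E A B" and "connected_on E C" "C \<subseteq> V"
    and "C \<inter> (A \<inter> B) = {}" "z \<in> C" "z \<in> A - B"
  shows "C \<subseteq> A - B"
proof -
  have "\<forall>w\<in>C. w \<in> A - B"
    by (rule connected_on_propagate[of E C z])
      (use assms two_separation_edge_side[OF sep] in blast)+
  then show ?thesis by blast
qed

lemma two_separation_model_side:
  assumes sep: "two_separation VG EG A B" and M: "is_model VH EH VG EG M"
    and W: "connected_on EH W" "W \<subseteq> VH"
    and avoid: "\<forall>h\<in>W. M h \<inter> (A \<inter> B) = {}"
    and "h\<^sub>0 \<in> W" "z \<in> M h\<^sub>0" "z \<in> A - B"
  shows "\<forall>h\<in>W. M h \<subseteq> A - B"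
proof (rule connected_on_propagate[OF W(1) \<open>h\<^sub>0 \<in> W\<close>])
  have branch_side: "M h \<subseteq> A - B" if "h \<in> W" "z' \<in> M h" "z' \<in> A - B" for h z'
    using two_separation_connected_side[OF sep] M W(2) avoid that
    unfolding is_model_def by blast
  show "M h\<^sub>0 \<subseteq> A - B" by (rule branch_side) fact+
  fix p q assume "EH p q" "p \<in> W" "q \<in> W" "M p \<subseteq> A - B"
  moreover from M W(2) \<open>EH p q\<close> \<open>p \<in> W\<close> \<open>q \<in> W\<close>
  obtain s t where "s \<in> M p" "t \<in> M q" "EG s t" "t \<in> VG"
    unfolding is_model_def by blast
  ultimately show "M q \<subseteq> A - B"
    using branch_side two_separation_edge_side[OF sep] avoid by blast
qed

theorem mainTheorem13:
  fixes VH :: "'b set" and EH :: "'b \<Rightarrow> 'b \<Rightarrow> bool"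
    and VG :: "'a set" and EG :: "'a \<Rightarrow> 'a \<Rightarrow> bool"
    and a b c d u v :: 'a and X A B :: "'a set"
    and F :: "('a \<Rightarrow> 'b) set"
  assumes "graph VH EH" and "k_connected 3 VH EH"
    and "X = {a, b, c, d}" and "card X = 4"
    and "\<forall>\<pi>\<in>F. inj_on \<pi> X \<and> \<pi> ` X \<subseteq> VH"
    and "graph VG EG" and "k_connected 2 VG EG" and "X \<subseteq> VG"
    and "two_separation VG EG A B" and "A \<inter> B = {u, v}"
    and "u \<in> X" and "v \<in> X"
    and "\<exists>x\<in>X - {u, v}. x \<in> A - {u, v}"
    and "\<exists>y\<in>X - {u, v}. y \<in> B - {u, v}"
  shows "\<not> has_rooted_minor VH EH VG EG X F"
proof
  assume "has_rooted_minor VH EH VG EG X F"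
  then obtain \<pi> M where "\<pi> \<in> F" and M: "is_model VH EH VG EG M"
    and roots: "\<forall>w\<in>X. w \<in> M (\<pi> w)"
    unfolding has_rooted_minor_def has_rooted_minor_wrt_def by blast
  obtain x y where x: "x \<in> X - {u, v}" "x \<in> A - {u, v}"
    and y: "y \<in> X - {u, v}" "y \<in> B - {u, v}"
    using assms(13,14) by blast
  have inj: "inj_on \<pi> X" and img: "\<pi> ` X \<subseteq> VH" using assms(5) \<open>\<pi> \<in> F\<close> by auto
  define W where "W = VH - {\<pi> u, \<pi> v}"
  have uv: "\<pi> u \<in> VH" "\<pi> v \<in> VH" using img assms(11,12) by auto
  have "connected_on EH (VH - S)" if "S \<subseteq> VH" "card S < 3" for S
    using assms(2) that by (simp add: k_connected_def)
  then have conn: "connected_on EH W" unfolding W_def using uv by (simp add: card_insert_if)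
  have disj: "M h \<inter> M h' = {}" if "h \<in> VH" "h' \<in> VH" "h \<noteq> h'" for h h'
    using M that by (simp add: is_model_def)
  have "u \<in> M (\<pi> u)" "v \<in> M (\<pi> v)" using roots assms(11,12) by auto
  then have avoid: "\<forall>h\<in>W. M h \<inter> (A \<inter> B) = {}"
    using disj[of _ "\<pi> u"] disj[of _ "\<pi> v"] uv unfolding W_def assms(10) by blast
  have "\<pi> x \<in> W" "\<pi> y \<in> W"
    using x y inj img assms(11,12) unfolding W_def by (auto simp: inj_on_eq_iff)
  have "x \<in> M (\<pi> x)" "x \<in> A - B" "y \<in> M (\<pi> y)" "y \<in> B - A"
    using roots x y assms(10) by auto
  moreover have "W \<subseteq> VH" unfolding W_def by blast
  ultimately have "M (\<pi> y) \<subseteq> A - B"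
    using two_separation_model_side[OF assms(9) M conn _ avoid \<open>\<pi> x \<in> W\<close>] \<open>\<pi> y \<in> W\<close>
    by simp
  with \<open>y \<in> M (\<pi> y)\<close> \<open>y \<in> B - A\<close> show False by blast
qed

end
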